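(* Let $(p_i)_{i\ge1}$ be a sequence of integers $p_i\ge 2$ and let $H_k$ be the iterated wreath product $\wr_{i=1}^{k}C_{p_i}$, realized as below. Let $f_{k,k+1}:H_k\to H_{k+1}$ be the injective homomorphism extending an automorphism of the $k$-level tree to the $(k+1)$-level tree by trivial vertex permutations at level $k$. Then the direct limit $\varinjlim H_k$ of the direct system $(H_k,f_{k,k+1})$ has commutator width $1$.
   Context: Let $T_k$ be the rooted tree with levels $0,1,\dots,k$ in which every vertex at level $i-1$ has $p_i$ children labelled $1,\dots,p_i$. $H_k$ is the group of automorphisms of $T_k$ such that at every vertex of level $i-1$ ($1\le i\le k$) the induced permutation of its children is a power of the cycle $(1,2,\dots,p_i)$; this group is isomorphic to the iterated permutational wreath product of the cyclic groups $C_{p_1},\dots,C_{p_k}$. The commutator width $cw(G)$ is the maximum, over elements $g$ of the derived subgroup $G'$, of the least number of commutators whose product is $g$. *)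

theory Defs
  imports "HOL-Algebra.Algebra" "HOL-Library.Extended_Nat"
begin

text \<open>Vertices of T_k are words v of length at most k with v!j < p (j+1); the
  vertex v lies at level (length v), and a vertex at level i-1 has p i children
  v@[c], c < p i (labels 0..p_i - 1 instead of 1..p_i).\<close>

definition tree_V :: "(nat \<Rightarrow> nat) \<Rightarrow> nat \<Rightarrow> nat list set" where
  "tree_V p k = {v. length v \<le> k \<and> (\<forall>j<length v. v ! j < p (Suc j))}"

text \<open>Automorphisms of T_k (extended by the identity outside the vertex set) such that
  at every non-leaf vertex the induced permutation of the children is a power of the
  cycle (0 1 ... p_i - 1).\<close>

definition wr_carrier :: "(nat \<Rightarrow> nat) \<Rightarrow> nat \<Rightarrow> (nat list \<Rightarrow> nat list) set" where
  "wr_carrier p k = {g.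
     bij_betw g (tree_V p k) (tree_V p k) \<and>
     (\<forall>v. v \<notin> tree_V p k \<longrightarrow> g v = v) \<and>
     (\<forall>v\<in>tree_V p k. length (g v) = length v \<and>
                     (v \<noteq> [] \<longrightarrow> g (butlast v) = butlast (g v))) \<and>
     (\<forall>v\<in>tree_V p k. length v < k \<longrightarrow>
        (\<exists>r. \<forall>c<p (Suc (length v)).
               g (v @ [c]) = g v @ [(c + r) mod p (Suc (length v))]))}"

definition wr_group :: "(nat \<Rightarrow> nat) \<Rightarrow> nat \<Rightarrow> (nat list \<Rightarrow> nat list) monoid" where
  "wr_group p k = \<lparr>carrier = wr_carrier p k, monoid.mult = (\<lambda>g h. g \<circ> h), one = id\<rparr>"

definition wr_ext :: "(nat \<Rightarrow> nat) \<Rightarrow> nat \<Rightarrow> (nat list \<Rightarrow> nat list) \<Rightarrow> (nat list \<Rightarrow> nat list)" where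
  "wr_ext p k g = (\<lambda>v. if v \<in> tree_V p (Suc k) \<and> length v = Suc k
                        then g (butlast v) @ [last v] else g v)"

text \<open>fiter f k n = f_{n-1} o ... o f_k for k \<le> n (identity if n \<le> k).\<close>

fun fiter :: "(nat \<Rightarrow> 'a \<Rightarrow> 'a) \<Rightarrow> nat \<Rightarrow> nat \<Rightarrow> 'a \<Rightarrow> 'a" where
  "fiter f k 0 x = x"
| "fiter f k (Suc n) x = (if Suc n \<le> k then x else f n (fiter f k n x))"

definition dl_rel :: "(nat \<Rightarrow> ('a, 'b) monoid_scheme) \<Rightarrow> (nat \<Rightarrow> 'a \<Rightarrow> 'a)
                      \<Rightarrow> ((nat \<times> 'a) \<times> (nat \<times> 'a)) set" where
  "dl_rel G f = {((k, x), (m, y)). x \<in> carrier (G k) \<and> y \<in> carrier (G m) \<and>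
                   (\<exists>n. k \<le> n \<and> m \<le> n \<and> fiter f k n x = fiter f m n y)}"

definition direct_limit :: "(nat \<Rightarrow> ('a, 'b) monoid_scheme) \<Rightarrow> (nat \<Rightarrow> 'a \<Rightarrow> 'a)
                            \<Rightarrow> (nat \<times> 'a) set monoid" where
  "direct_limit G f = \<lparr>
     carrier = (SIGMA k:UNIV. carrier (G k)) // dl_rel G f,
     monoid.mult = (\<lambda>A B. SOME C. \<exists>k x m y. (k, x) \<in> A \<and> (m, y) \<in> B \<and>
               C = dl_rel G f `` {(max k m,
                     fiter f k (max k m) x \<otimes>\<^bsub>G (max k m)\<^esub> fiter f m (max k m) y)}),
     one = dl_rel G f `` {(0, \<one>\<^bsub>G 0\<^esub>)}\<rparr>"

definition commutator :: "('a, 'b) monoid_scheme \<Rightarrow> 'a \<Rightarrow> 'a \<Rightarrow> 'a" where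
  "commutator G x y = x \<otimes>\<^bsub>G\<^esub> y \<otimes>\<^bsub>G\<^esub> inv\<^bsub>G\<^esub> x \<otimes>\<^bsub>G\<^esub> inv\<^bsub>G\<^esub> y"

fun mprod :: "('a, 'b) monoid_scheme \<Rightarrow> 'a list \<Rightarrow> 'a" where
  "mprod G [] = \<one>\<^bsub>G\<^esub>"
| "mprod G (a # as) = a \<otimes>\<^bsub>G\<^esub> mprod G as"

definition is_comm_prod :: "('a, 'b) monoid_scheme \<Rightarrow> nat \<Rightarrow> 'a \<Rightarrow> bool" where
  "is_comm_prod G n g = (\<exists>xs ys. length xs = n \<and> length ys = n \<and>
      set xs \<subseteq> carrier G \<and> set ys \<subseteq> carrier G \<and>
      g = mprod G (map2 (commutator G) xs ys))"

definition commutator_length :: "('a, 'b) monoid_scheme \<Rightarrow> 'a \<Rightarrow> nat" where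
  "commutator_length G g = (LEAST n. is_comm_prod G n g)"

definition commutator_width :: "('a, 'b) monoid_scheme \<Rightarrow> enat" where
  "commutator_width G = (SUP g \<in> derived G (carrier G). enat (commutator_length G g))"

end

theory Submission
  imports Defs
begin

text \<open>
  For g in H_k and a vertex u at level i < k let rot g u be the rotation that g applies to the
  children of u. Summing rot g u over level i modulo p_(i+1) is a homomorphism from H_k to the
  cyclic group C_(p_(i+1)), so every commutator, and hence every element of the derived subgroup,
  is balanced: all these level sums vanish.
  Conversely, a balanced g is a single commutator [a, b] with a the odometer (adding machine),
  which permutes each level of the tree in a single cycle. The element b with g b a = a b is built
  level by level; at level k its rotations must solve a coboundary equation along the cycle of a,
  and this equation is solvable precisely because the level sum of g at level k vanishes.
  Since the maps f_(k,k+1) are homomorphisms, every element of the derived subgroup of the direct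
  limit comes from the derived subgroup of some H_k, hence is a commutator; and because they are
  injective, a nontrivial balanced element of H_2 stays nontrivial in the limit.
\<close>

section \<open>Commutator width\<close>

lemma (in group) commutator_closed [intro, simp]:
  "x \<in> carrier G \<Longrightarrow> y \<in> carrier G \<Longrightarrow> commutator G x y \<in> carrier G"
  by (simp add: commutator_def)

lemma (in group) commutator_in_derived:
  "x \<in> carrier G \<Longrightarrow> y \<in> carrier G \<Longrightarrow> commutator G x y \<in> derived G (carrier G)"
  unfolding derived_def commutator_def by (rule generate.incl) blast

lemma (in group_hom) hom_commutator:
  "x \<in> carrier G \<Longrightarrow> y \<in> carrier G \<Longrightarrow> h (commutator G x y) = commutator H (h x) (h y)"
  by (simp add: commutator_def)

lemma is_comm_prod_0_iff: "is_comm_prod G 0 g \<longleftrightarrow> g = \<one>\<^bsub>G\<^esub>"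
  by (simp add: is_comm_prod_def)

lemma (in group) is_comm_prod_1_iff:
  "is_comm_prod G 1 g \<longleftrightarrow> (\<exists>x\<in>carrier G. \<exists>y\<in>carrier G. g = commutator G x y)"
proof
  assume "is_comm_prod G 1 g"
  then obtain x y where "x \<in> carrier G" "y \<in> carrier G" "g = commutator G x y"
    by (auto simp: is_comm_prod_def length_Suc_conv)
  then show "\<exists>x\<in>carrier G. \<exists>y\<in>carrier G. g = commutator G x y" by blast
next
  assume "\<exists>x\<in>carrier G. \<exists>y\<in>carrier G. g = commutator G x y"
  then obtain x y where "x \<in> carrier G" "y \<in> carrier G" "g = commutator G x y" by blast
  then show "is_comm_prod G 1 g"
    unfolding is_comm_prod_def by (intro exI[of _ "[x]"] exI[of _ "[y]"]) simp
qed

lemma (in group) commutator_width_eq_1: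
  assumes all_commutators:
      "\<And>g. g \<in> derived G (carrier G) \<Longrightarrow> \<exists>x\<in>carrier G. \<exists>y\<in>carrier G. g = commutator G x y"
    and nontrivial: "z \<in> derived G (carrier G)" "z \<noteq> \<one>"
  shows "commutator_width G = 1"
proof -
  have comm_prod_1: "is_comm_prod G 1 g" if "g \<in> derived G (carrier G)" for g
    using all_commutators[OF that] is_comm_prod_1_iff by blast
  have length_le_1: "commutator_length G g \<le> 1" if "g \<in> derived G (carrier G)" for g
    unfolding commutator_length_def using comm_prod_1[OF that] by (rule Least_le)
  have "commutator_length G z \<noteq> 0"
    unfolding commutator_length_def
    using LeastI[of "\<lambda>n. is_comm_prod G n z" 1, OF comm_prod_1[OF nontrivial(1)]] nontrivial(2)
    by (metis is_comm_prod_0_iff)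
  then have "commutator_length G z = 1" using length_le_1[OF nontrivial(1)] by simp
  then show ?thesis
    unfolding commutator_width_def using length_le_1 nontrivial(1)
    by (intro antisym SUP_least) (auto simp: one_enat_def intro: SUP_upper2[where i = z])
qed

section \<open>Direct limits of groups\<close>

lemma fiter_below: "n \<le> k \<Longrightarrow> fiter f k n x = x"
  by (induction n) auto

lemma fiter_fiter: "k \<le> m \<Longrightarrow> m \<le> n \<Longrightarrow> fiter f m n (fiter f k m x) = fiter f k n x"
  by (induction n) (auto simp: fiter_below le_Suc_eq)

definition dl_map :: "(nat \<Rightarrow> ('a, 'b) monoid_scheme) \<Rightarrow> (nat \<Rightarrow> 'a \<Rightarrow> 'a) \<Rightarrow> nat \<Rightarrow> 'a
                      \<Rightarrow> (nat \<times> 'a) set" where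
  "dl_map G f k x = dl_rel G f `` {(k, x)}"

lemma eventually_fiter_eq:
  assumes "k \<le> n0" "m \<le> n0" "fiter f k n0 x = fiter f m n0 y"
  shows "\<forall>\<^sub>F n in sequentially. fiter f k n x = fiter f m n y"
  unfolding eventually_sequentially
  using assms by (intro exI[of _ n0]) (metis fiter_fiter)

lemma dl_rel_iff_eventually:
  "((k, x), (m, y)) \<in> dl_rel G f \<longleftrightarrow> x \<in> carrier (G k) \<and> y \<in> carrier (G m) \<and>
     (\<forall>\<^sub>F n in sequentially. fiter f k n x = fiter f m n y)"
proof -
  have "(\<exists>n\<ge>k. m \<le> n \<and> fiter f k n x = fiter f m n y) \<longleftrightarrow>
        (\<forall>\<^sub>F n in sequentially. fiter f k n x = fiter f m n y)"
  proof
    assume "\<exists>n\<ge>k. m \<le> n \<and> fiter f k n x = fiter f m n y"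
    then obtain n where "k \<le> n" "m \<le> n" "fiter f k n x = fiter f m n y" by blast
    then show "\<forall>\<^sub>F n in sequentially. fiter f k n x = fiter f m n y"
      by (rule eventually_fiter_eq)
  next
    assume "\<forall>\<^sub>F n in sequentially. fiter f k n x = fiter f m n y"
    then obtain N where "\<forall>n\<ge>N. fiter f k n x = fiter f m n y"
      unfolding eventually_sequentially by blast
    then show "\<exists>n\<ge>k. m \<le> n \<and> fiter f k n x = fiter f m n y"
      by (intro exI[of _ "max N (max k m)"]) auto
  qed
  then show ?thesis by (simp add: dl_rel_def)
qed

lemma equiv_dl_rel: "equiv (SIGMA k:UNIV. carrier (G k)) (dl_rel G f)"
proof (rule equivI)
  show "dl_rel G f \<subseteq> (SIGMA k:UNIV. carrier (G k)) \<times> (SIGMA k:UNIV. carrier (G k))"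
    by (auto simp: dl_rel_def)
  show "refl_on (SIGMA k:UNIV. carrier (G k)) (dl_rel G f)"
    by (auto simp: refl_on_def dl_rel_iff_eventually)
  show "sym (dl_rel G f)"
  proof (rule symI, clarify)
    fix k x m y
    assume "((k, x), (m, y)) \<in> dl_rel G f"
    then show "((m, y), (k, x)) \<in> dl_rel G f"
      unfolding dl_rel_iff_eventually by (auto elim: eventually_mono)
  qed
  show "trans (dl_rel G f)"
  proof (rule transI, clarify)
    fix k x m y l z
    assume "((k, x), (m, y)) \<in> dl_rel G f" "((m, y), (l, z)) \<in> dl_rel G f"
    then have carrier: "x \<in> carrier (G k)" "z \<in> carrier (G l)"
      and ev: "\<forall>\<^sub>F n in sequentially. fiter f k n x = fiter f m n y \<and> fiter f m n y = fiter f l n z"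
      by (simp_all add: dl_rel_iff_eventually eventually_conj_iff)
    have "\<forall>\<^sub>F n in sequentially. fiter f k n x = fiter f l n z"
      using ev by (rule eventually_mono) simp
    with carrier show "((k, x), (l, z)) \<in> dl_rel G f"
      by (simp add: dl_rel_iff_eventually)
  qed
qed

lemma dl_map_eq_iff:
  assumes "x \<in> carrier (G k)" "y \<in> carrier (G m)"
  shows "dl_map G f k x = dl_map G f m y \<longleftrightarrow> (\<forall>\<^sub>F n in sequentially. fiter f k n x = fiter f m n y)"
  using eq_equiv_class_iff[OF equiv_dl_rel[of G f], of "(k, x)" "(m, y)"] assms
  by (simp add: dl_map_def dl_rel_iff_eventually)

lemma carrier_direct_limit:
  "carrier (direct_limit G f) = {dl_map G f k x | k x. x \<in> carrier (G k)}"
  by (auto simp: direct_limit_def quotient_def dl_map_def)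

lemma one_direct_limit: "\<one>\<^bsub>direct_limit G f\<^esub> = dl_map G f 0 \<one>\<^bsub>G 0\<^esub>"
  by (simp add: direct_limit_def dl_map_def)

locale direct_system =
  fixes G :: "nat \<Rightarrow> ('a, 'b) monoid_scheme" and f :: "nat \<Rightarrow> 'a \<Rightarrow> 'a"
  assumes group: "group (G k)"
    and hom: "f k \<in> hom (G k) (G (Suc k))"
begin

abbreviation DL where "DL \<equiv> direct_limit G f"
abbreviation inc where "inc \<equiv> dl_map G f"

lemma fiter_hom: "k \<le> n \<Longrightarrow> fiter f k n \<in> hom (G k) (G n)"
proof (induction n)
  case 0
  then show ?case by (intro homI) auto
next
  case (Suc n)
  show ?case
  proof (cases "k \<le> n")
    case True
    then have "fiter f k (Suc n) = f n \<circ> fiter f k n" by auto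
    then show ?thesis using hom_compose[OF Suc.IH[OF True] hom] by (simp add: o_def)
  next
    case False
    then have "k = Suc n" using Suc.prems by simp
    then show ?thesis by (intro homI) (auto simp: fiter_below)
  qed
qed

lemma group_hom_fiter: "k \<le> n \<Longrightarrow> group_hom (G k) (G n) (fiter f k n)"
  unfolding group_hom_def group_hom_axioms_def by (simp add: group fiter_hom)

lemma fiter_closed: "x \<in> carrier (G k) \<Longrightarrow> k \<le> n \<Longrightarrow> fiter f k n x \<in> carrier (G n)"
  by (rule hom_in_carrier[OF fiter_hom])

lemma inc_fiter:
  assumes "x \<in> carrier (G k)" "k \<le> n"
  shows "inc n (fiter f k n x) = inc k x"
  unfolding dl_map_eq_iff[OF fiter_closed[OF assms] assms(1)] eventually_sequentially
  using assms(2) by (auto intro: exI[of _ n] simp: fiter_fiter)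

lemma eventually_inc:
  assumes "A \<in> carrier DL"
  shows "\<forall>\<^sub>F n in sequentially. \<exists>x\<in>carrier (G n). A = inc n x"
proof -
  obtain k x where A: "A = inc k x" and x: "x \<in> carrier (G k)"
    using assms by (auto simp: carrier_direct_limit)
  have "\<exists>x'\<in>carrier (G n). A = inc n x'" if "k \<le> n" for n
    using that A x by (intro bexI[of _ "fiter f k n x"]) (simp_all add: inc_fiter fiter_closed)
  then show ?thesis
    unfolding eventually_sequentially by blast
qed

lemma inc_closed: "x \<in> carrier (G k) \<Longrightarrow> inc k x \<in> carrier DL"
  by (auto simp: carrier_direct_limit)

lemma inc_mult_representatives:
  assumes x: "x \<in> carrier (G n)" and y: "y \<in> carrier (G n)"
    and x': "(k, x') \<in> inc n x" and y': "(m, y') \<in> inc n y"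
  shows "inc (max k m) (fiter f k (max k m) x' \<otimes>\<^bsub>G (max k m)\<^esub> fiter f m (max k m) y')
    = inc n (x \<otimes>\<^bsub>G n\<^esub> y)"
proof -
  let ?M = "max k m"
  interpret GM: group "G ?M" by (rule group)
  interpret Gn: group "G n" by (rule group)
  have x': "x' \<in> carrier (G k)" "\<forall>\<^sub>F N in sequentially. fiter f n N x = fiter f k N x'"
    and y': "y' \<in> carrier (G m)" "\<forall>\<^sub>F N in sequentially. fiter f n N y = fiter f m N y'"
    using x' y' by (auto simp: dl_map_def dl_rel_iff_eventually)
  have "\<forall>\<^sub>F N in sequentially.
      fiter f ?M N (fiter f k ?M x' \<otimes>\<^bsub>G ?M\<^esub> fiter f m ?M y') = fiter f n N (x \<otimes>\<^bsub>G n\<^esub> y)"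
    using x'(2) y'(2) eventually_ge_at_top[of "max ?M n"]
  proof eventually_elim
    case (elim N)
    have "fiter f ?M N (fiter f k ?M x' \<otimes>\<^bsub>G ?M\<^esub> fiter f m ?M y')
        = fiter f k N x' \<otimes>\<^bsub>G N\<^esub> fiter f m N y'"
      using elim x'(1) y'(1)
      by (simp add: group_hom.hom_mult[OF group_hom_fiter] fiter_closed fiter_fiter)
    also have "\<dots> = fiter f n N (x \<otimes>\<^bsub>G n\<^esub> y)"
      using elim x y by (simp add: group_hom.hom_mult[OF group_hom_fiter])
    finally show ?case .
  qed
  then show ?thesis
    using x y x'(1) y'(1) by (subst dl_map_eq_iff) (simp_all add: fiter_closed)
qed

lemma inc_mult:
  assumes x: "x \<in> carrier (G n)" and y: "y \<in> carrier (G n)"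
  shows "inc n x \<otimes>\<^bsub>DL\<^esub> inc n y = inc n (x \<otimes>\<^bsub>G n\<^esub> y)"
proof -
  let ?prod = "\<lambda>k x' m y'. inc (max k m)
        (fiter f k (max k m) x' \<otimes>\<^bsub>G (max k m)\<^esub> fiter f m (max k m) y')"
  have self: "(n, z) \<in> inc n z" if "z \<in> carrier (G n)" for z
    using that by (simp add: dl_map_def dl_rel_iff_eventually)
  have "inc n x \<otimes>\<^bsub>DL\<^esub> inc n y =
      (SOME C. \<exists>k x' m y'. (k, x') \<in> inc n x \<and> (m, y') \<in> inc n y \<and> C = ?prod k x' m y')"
    by (simp add: direct_limit_def dl_map_def)
  also have "\<dots> = inc n (x \<otimes>\<^bsub>G n\<^esub> y)"
  proof (rule some_equality)
    show "\<exists>k x' m y'. (k, x') \<in> inc n x \<and> (m, y') \<in> inc n y \<and>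
        inc n (x \<otimes>\<^bsub>G n\<^esub> y) = ?prod k x' m y'"
      using inc_mult_representatives[OF x y self[OF x] self[OF y]] self[OF x] self[OF y] by metis
  qed (use inc_mult_representatives[OF x y] in metis)
  finally show ?thesis .
qed

lemma one_direct_limit_inc: "\<one>\<^bsub>DL\<^esub> = inc n \<one>\<^bsub>G n\<^esub>"
proof -
  interpret G0: group "G 0" by (rule group)
  have "fiter f 0 n \<one>\<^bsub>G 0\<^esub> = \<one>\<^bsub>G n\<^esub>"
    by (rule group_hom.hom_one[OF group_hom_fiter]) simp
  then show ?thesis
    using inc_fiter[of "\<one>\<^bsub>G 0\<^esub>" 0 n] by (simp add: one_direct_limit)
qed

lemma common_level:
  assumes "A \<in> carrier DL" "B \<in> carrier DL" "C \<in> carrier DL"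
  obtains n x y z where "x \<in> carrier (G n)" "y \<in> carrier (G n)" "z \<in> carrier (G n)"
    and "A = inc n x" "B = inc n y" "C = inc n z"
proof -
  have "\<forall>\<^sub>F n in sequentially. (\<exists>x\<in>carrier (G n). A = inc n x) \<and>
      (\<exists>y\<in>carrier (G n). B = inc n y) \<and> (\<exists>z\<in>carrier (G n). C = inc n z)"
    using assms by (intro eventually_conj eventually_inc)
  then obtain n where "(\<exists>x\<in>carrier (G n). A = inc n x) \<and>
      (\<exists>y\<in>carrier (G n). B = inc n y) \<and> (\<exists>z\<in>carrier (G n). C = inc n z)"
    using eventually_happens'[OF sequentially_bot] by blast
  then show ?thesis using that by blast
qed

lemma group_direct_limit: "group DL"
proof (rule groupI)
  show "\<one>\<^bsub>DL\<^esub> \<in> carrier DL"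
    using one_direct_limit_inc[of 0] inc_closed group.subgroup_self[OF group] subgroup.one_closed
    by metis
next
  fix A B assume A: "A \<in> carrier DL" and B: "B \<in> carrier DL"
  obtain n x y where "x \<in> carrier (G n)" "y \<in> carrier (G n)" "A = inc n x" "B = inc n y"
    by (rule common_level[OF A B A]) blast
  moreover have "group (G n)" by (rule group)
  ultimately show "A \<otimes>\<^bsub>DL\<^esub> B \<in> carrier DL"
    by (simp add: inc_mult inc_closed monoid.m_closed group.is_monoid)
next
  fix A B C assume "A \<in> carrier DL" "B \<in> carrier DL" "C \<in> carrier DL"
  then obtain n x y z where "x \<in> carrier (G n)" "y \<in> carrier (G n)" "z \<in> carrier (G n)"
    and "A = inc n x" "B = inc n y" "C = inc n z"
    by (rule common_level)
  moreover have "group (G n)" by (rule group)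
  ultimately show "A \<otimes>\<^bsub>DL\<^esub> B \<otimes>\<^bsub>DL\<^esub> C = A \<otimes>\<^bsub>DL\<^esub> (B \<otimes>\<^bsub>DL\<^esub> C)"
    by (simp add: inc_mult monoid.m_closed monoid.m_assoc group.is_monoid)
next
  fix A assume "A \<in> carrier DL"
  then obtain n x where x: "x \<in> carrier (G n)" and A: "A = inc n x"
    by (auto simp: carrier_direct_limit)
  interpret Gn: group "G n" by (rule group)
  show "\<one>\<^bsub>DL\<^esub> \<otimes>\<^bsub>DL\<^esub> A = A"
    using x by (simp add: A one_direct_limit_inc[of n] inc_mult)
  have "inc n (inv\<^bsub>G n\<^esub> x) \<otimes>\<^bsub>DL\<^esub> A = \<one>\<^bsub>DL\<^esub>"
    using x by (simp add: A one_direct_limit_inc[of n] inc_mult)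
  then show "\<exists>B\<in>carrier DL. B \<otimes>\<^bsub>DL\<^esub> A = \<one>\<^bsub>DL\<^esub>"
    using x by (intro bexI[of _ "inc n (inv\<^bsub>G n\<^esub> x)"]) (simp_all add: inc_closed)
qed

lemma group_hom_inc: "group_hom (G n) DL (inc n)"
  unfolding group_hom_def group_hom_axioms_def
  by (auto simp: group group_direct_limit inc_closed inc_mult intro!: homI)

lemma inj_on_fiter:
  assumes "\<And>k. inj_on (f k) (carrier (G k))"
  shows "inj_on (fiter f k n) (carrier (G k))"
proof (induction n)
  case 0
  show ?case by (simp add: inj_on_def)
next
  case (Suc n)
  show ?case
  proof (cases "k \<le> n")
    case True
    have "inj_on (f n \<circ> fiter f k n) (carrier (G k))"
      using Suc.IH assms[of n] fiter_closed[OF _ True]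
      by (intro comp_inj_on) (auto intro: inj_on_subset)
    then show ?thesis using True by (simp add: o_def)
  next
    case False
    then show ?thesis by (simp add: inj_on_def)
  qed
qed

lemma inj_on_inc:
  assumes "\<And>k. inj_on (f k) (carrier (G k))"
  shows "inj_on (inc n) (carrier (G n))"
proof (rule inj_onI)
  fix x y assume x: "x \<in> carrier (G n)" and y: "y \<in> carrier (G n)" and "inc n x = inc n y"
  then have "\<forall>\<^sub>F N in sequentially. fiter f n N x = fiter f n N y"
    by (simp add: dl_map_eq_iff)
  then obtain N where "fiter f n N x = fiter f n N y"
    using eventually_happens'[OF sequentially_bot] by blast
  then show "x = y"
    using inj_on_fiter[OF assms] x y by (auto dest: inj_onD)
qed

lemma fiter_derived:
  assumes "g \<in> derived (G k) (carrier (G k))" "k \<le> n"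
  shows "fiter f k n g \<in> derived (G n) (carrier (G n))"
proof -
  interpret h: group_hom "G k" "G n" "fiter f k n" by (rule group_hom_fiter[OF assms(2)])
  have "fiter f k n g \<in> derived (G n) (fiter f k n ` carrier (G k))"
    using assms(1) by (simp add: h.derived_img)
  also have "\<dots> \<subseteq> derived (G n) (carrier (G n))"
    by (intro h.H.mono_derived) (auto intro: fiter_closed[OF _ assms(2)])
  finally show ?thesis .
qed

lemma derived_subset_carrier: "derived (G n) (carrier (G n)) \<subseteq> carrier (G n)"
  by (rule group.derived_in_carrier[OF group]) simp

lemma inc_derived_mono:
  assumes "g \<in> derived (G k) (carrier (G k))" "k \<le> n"
  shows "inc k g \<in> inc n ` derived (G n) (carrier (G n))"
  using inc_fiter[OF subsetD[OF derived_subset_carrier assms(1)] assms(2)] fiter_derived[OF assms]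
  by (metis image_eqI)

lemma subgroup_inc_derived: "subgroup (\<Union>n. inc n ` derived (G n) (carrier (G n))) DL"
  (is "subgroup ?U DL")
proof (rule group.subgroupI[OF group_direct_limit])
  show "?U \<subseteq> carrier DL" using derived_subset_carrier inc_closed by blast
  show "?U \<noteq> {}" using group.derived_is_subgroup[OF group, of "carrier (G 0)"]
    by (auto dest: subgroup.one_closed)
next
  fix A assume "A \<in> ?U"
  then obtain n g where A: "A = inc n g" and g: "g \<in> derived (G n) (carrier (G n))" by blast
  interpret h: group_hom "G n" DL "inc n" by (rule group_hom_inc)
  have "inv\<^bsub>DL\<^esub> A = inc n (inv\<^bsub>G n\<^esub> g)"
    using h.hom_inv[OF subsetD[OF derived_subset_carrier g]] by (simp add: A)
  moreover have "inv\<^bsub>G n\<^esub> g \<in> derived (G n) (carrier (G n))"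
    using g subgroup.m_inv_closed[OF h.G.derived_is_subgroup] by simp
  ultimately show "inv\<^bsub>DL\<^esub> A \<in> ?U" by blast
next
  fix A B assume "A \<in> ?U" "B \<in> ?U"
  then obtain k g m h where "A = inc k g" "g \<in> derived (G k) (carrier (G k))"
    and "B = inc m h" "h \<in> derived (G m) (carrier (G m))" by blast
  then obtain g' h' where A: "A = inc (max k m) g'" and B: "B = inc (max k m) h'"
    and g': "g' \<in> derived (G (max k m)) (carrier (G (max k m)))"
    and h': "h' \<in> derived (G (max k m)) (carrier (G (max k m)))"
    using inc_derived_mono[of g k "max k m"] inc_derived_mono[of h m "max k m"] by auto
  interpret Gn: group "G (max k m)" by (rule group)
  have "A \<otimes>\<^bsub>DL\<^esub> B = inc (max k m) (g' \<otimes>\<^bsub>G (max k m)\<^esub> h')"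
    using g' h' derived_subset_carrier by (simp add: A B inc_mult subset_iff)
  moreover have "g' \<otimes>\<^bsub>G (max k m)\<^esub> h' \<in> derived (G (max k m)) (carrier (G (max k m)))"
    using g' h' subgroup.m_closed[OF Gn.derived_is_subgroup] by simp
  ultimately show "A \<otimes>\<^bsub>DL\<^esub> B \<in> ?U" by blast
qed

lemma derived_set_direct_limit_subset:
  "derived_set DL (carrier DL) \<subseteq> (\<Union>n. inc n ` derived (G n) (carrier (G n)))"
proof clarify
  fix A B assume A: "A \<in> carrier DL" and B: "B \<in> carrier DL"
  obtain n x y where xy: "x \<in> carrier (G n)" "y \<in> carrier (G n)"
    and "A = inc n x" "B = inc n y"
    by (rule common_level[OF A B A]) blast
  interpret h: group_hom "G n" DL "inc n" by (rule group_hom_inc)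
  have "A \<otimes>\<^bsub>DL\<^esub> B \<otimes>\<^bsub>DL\<^esub> inv\<^bsub>DL\<^esub> A \<otimes>\<^bsub>DL\<^esub> inv\<^bsub>DL\<^esub> B = inc n (commutator (G n) x y)"
    using xy by (simp add: \<open>A = inc n x\<close> \<open>B = inc n y\<close> h.hom_commutator commutator_def)
  then show "A \<otimes>\<^bsub>DL\<^esub> B \<otimes>\<^bsub>DL\<^esub> inv\<^bsub>DL\<^esub> A \<otimes>\<^bsub>DL\<^esub> inv\<^bsub>DL\<^esub> B
      \<in> (\<Union>n. inc n ` derived (G n) (carrier (G n)))"
    using h.G.commutator_in_derived[OF xy] by blast
qed

lemma derived_direct_limit_subset:
  "derived DL (carrier DL) \<subseteq> (\<Union>n. inc n ` derived (G n) (carrier (G n)))"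
  unfolding derived_def[of DL]
  by (rule group.generate_subgroup_incl[OF group_direct_limit derived_set_direct_limit_subset
        subgroup_inc_derived])

lemma derived_direct_limit_commutator:
  assumes "\<And>n g. g \<in> derived (G n) (carrier (G n)) \<Longrightarrow>
      \<exists>x\<in>carrier (G n). \<exists>y\<in>carrier (G n). g = commutator (G n) x y"
    and "A \<in> derived DL (carrier DL)"
  shows "\<exists>U\<in>carrier DL. \<exists>V\<in>carrier DL. A = commutator DL U V"
proof -
  obtain n g where "A = inc n g" and "g \<in> derived (G n) (carrier (G n))"
    using derived_direct_limit_subset assms(2) by blast
  then obtain x y where xy: "x \<in> carrier (G n)" "y \<in> carrier (G n)"
    and A: "A = inc n (commutator (G n) x y)"
    using assms(1) by blast
  interpret h: group_hom "G n" DL "inc n" by (rule group_hom_inc)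
  have "A = commutator DL (inc n x) (inc n y)"
    using xy by (simp add: A h.hom_commutator)
  then show ?thesis using xy inc_closed by blast
qed

end

section \<open>The groups H_k\<close>

lemma tree_V_Nil [simp]: "[] \<in> tree_V p k"
  by (simp add: tree_V_def)

lemma tree_V_snoc:
  "v @ [c] \<in> tree_V p k \<longleftrightarrow> v \<in> tree_V p k \<and> length v < k \<and> c < p (Suc (length v))"
  unfolding tree_V_def
  by (auto simp: nth_append split: if_splits) (metis less_SucI less_Suc_eq)

lemma tree_V_mono: "k \<le> k' \<Longrightarrow> v \<in> tree_V p k \<Longrightarrow> v \<in> tree_V p k'"
  by (auto simp: tree_V_def)

lemma tree_V_Suc_iff: "length v \<le> k \<Longrightarrow> v \<in> tree_V p (Suc k) \<longleftrightarrow> v \<in> tree_V p k"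
  by (auto simp: tree_V_def)

lemma finite_tree_V: "finite (tree_V p k)"
proof (rule finite_subset)
  let ?B = "\<Sum>j<k. p (Suc j)"
  show "tree_V p k \<subseteq> {xs. set xs \<subseteq> {..<?B} \<and> length xs \<le> k}"
  proof (clarsimp simp: tree_V_def)
    fix v x assume v: "length v \<le> k" "\<forall>j<length v. v ! j < p (Suc j)" and "x \<in> set v"
    then obtain j where j: "j < length v" "x = v ! j" by (auto simp: in_set_conv_nth)
    have "p (Suc j) \<le> ?B" using j v by (intro member_le_sum) auto
    then show "x < ?B" using v j by (metis order_less_le_trans)
  qed
  show "finite {xs. set xs \<subseteq> {..<?B} \<and> length xs \<le> k}"
    by (rule finite_lists_length_le) simp
qed

definition tree_level :: "(nat \<Rightarrow> nat) \<Rightarrow> nat \<Rightarrow> nat list set" where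
  "tree_level p i = {v \<in> tree_V p i. length v = i}"

lemma tree_level_iff: "i \<le> k \<Longrightarrow> v \<in> tree_level p i \<longleftrightarrow> v \<in> tree_V p k \<and> length v = i"
  by (auto simp: tree_level_def tree_V_def)

lemma finite_tree_level: "finite (tree_level p i)"
  using finite_tree_V[of p i] by (simp add: tree_level_def)

definition wr_elem :: "(nat \<Rightarrow> nat) \<Rightarrow> nat \<Rightarrow> (nat list \<Rightarrow> nat list) \<Rightarrow> bool" where
  "wr_elem p k g \<longleftrightarrow> (\<forall>v. v \<notin> tree_V p k \<longrightarrow> g v = v) \<and> g [] = [] \<and>
     (\<forall>v\<in>tree_V p k. length v < k \<longrightarrow>
        (\<exists>r. \<forall>c<p (Suc (length v)). g (v @ [c]) = g v @ [(c + r) mod p (Suc (length v))]))"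

lemma wr_elemI:
  assumes "\<And>v. v \<notin> tree_V p k \<Longrightarrow> g v = v" "g [] = []"
    and "\<And>v c. v \<in> tree_V p k \<Longrightarrow> length v < k \<Longrightarrow> c < p (Suc (length v)) \<Longrightarrow>
      g (v @ [c]) = g v @ [(c + r v) mod p (Suc (length v))]"
  shows "wr_elem p k g"
  using assms unfolding wr_elem_def by blast

lemma wr_elem_fixes: "wr_elem p k g \<Longrightarrow> v \<notin> tree_V p k \<Longrightarrow> g v = v"
  by (simp add: wr_elem_def)

lemma wr_elem_Nil: "wr_elem p k g \<Longrightarrow> g [] = []"
  by (simp add: wr_elem_def)

definition rot :: "(nat list \<Rightarrow> nat list) \<Rightarrow> nat list \<Rightarrow> nat" where
  "rot g v = last (g (v @ [0]))"

text \<open>Positivity of the p_i suffices for everything except the nontriviality of the derived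
  subgroup, which needs p_1, p_2 \<ge> 2.\<close>

locale wreath =
  fixes p :: "nat \<Rightarrow> nat"
  assumes p_pos: "0 < p (Suc j)"
begin

lemma wr_elem_rot:
  assumes "wr_elem p k g" "v \<in> tree_V p k" "length v < k" "c < p (Suc (length v))"
  shows "g (v @ [c]) = g v @ [(c + rot g v) mod p (Suc (length v))]"
proof -
  obtain r where r: "\<forall>c<p (Suc (length v)). g (v @ [c]) = g v @ [(c + r) mod p (Suc (length v))]"
    using assms(1-3) unfolding wr_elem_def by blast
  then have "rot g v = r mod p (Suc (length v))" using p_pos by (simp add: rot_def)
  then show ?thesis using r assms(4) by (simp add: mod_add_right_eq)
qed

lemma rot_less:
  assumes "wr_elem p k g" "v \<in> tree_V p k" "length v < k"
  shows "rot g v < p (Suc (length v))"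
proof -
  have "g (v @ [0]) = g v @ [rot g v mod p (Suc (length v))]"
    using wr_elem_rot[OF assms p_pos] by simp
  then have "rot g v = rot g v mod p (Suc (length v))" by (metis rot_def last_snoc)
  then show ?thesis using p_pos by (metis mod_less_divisor)
qed

lemma wr_elem_maps:
  assumes "wr_elem p k g" "v \<in> tree_V p k"
  shows "g v \<in> tree_V p k \<and> length (g v) = length v"
  using assms(2)
proof (induction v rule: rev_induct)
  case Nil
  then show ?case using assms(1) by (simp add: wr_elem_def)
next
  case (snoc c v)
  then have v: "v \<in> tree_V p k" "length v < k" "c < p (Suc (length v))"
    by (auto simp: tree_V_snoc)
  show ?case
    using snoc.IH[OF v(1)] wr_elem_rot[OF assms(1) v] v p_pos by (simp add: tree_V_snoc)
qed

lemma wr_elem_length: "wr_elem p k g \<Longrightarrow> length (g v) = length v"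
  using wr_elem_maps[of k g v] by (cases "v \<in> tree_V p k") (auto simp: wr_elem_def)

lemma wr_elem_inj_on:
  assumes g: "wr_elem p k g"
  shows "inj_on g (tree_V p k)"
proof -
  have "\<forall>w\<in>tree_V p k. g v = g w \<longrightarrow> v = w" if "v \<in> tree_V p k" for v
    using that
  proof (induction v rule: rev_induct)
    case Nil
    then show ?case using wr_elem_length[OF g] by (metis length_0_conv)
  next
    case (snoc c v)
    have v: "v \<in> tree_V p k" "length v < k" "c < p (Suc (length v))"
      using snoc.prems by (auto simp: tree_V_snoc)
    show ?case
    proof (intro ballI impI)
      fix w assume w: "w \<in> tree_V p k" and eq: "g (v @ [c]) = g w"
      obtain u d where wud: "w = u @ [d]"
        using eq wr_elem_length[OF g, of w] wr_elem_length[OF g, of "v @ [c]"]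
        by (cases w rule: rev_cases) auto
      have u: "u \<in> tree_V p k" "length u < k" "d < p (Suc (length u))"
        using w by (auto simp: wud tree_V_snoc)
      have "g v = g u"
        and rot_eq: "(c + rot g v) mod p (Suc (length v)) = (d + rot g u) mod p (Suc (length u))"
        using eq by (simp_all add: wud wr_elem_rot[OF g v] wr_elem_rot[OF g u])
      then have "v = u" using snoc.IH[OF v(1)] u(1) by blast
      then have "(c + rot g v) mod p (Suc (length v)) = (d + rot g v) mod p (Suc (length v))"
        using rot_eq by simp
      then have "c mod p (Suc (length v)) = d mod p (Suc (length v))"
        by (simp add: nat_mod_eq_iff)
      then have "c = d" using v(3) u(3) \<open>v = u\<close> by simp
      then show "v @ [c] = w" using \<open>v = u\<close> wud by simp
    qed
  qed
  then show ?thesis unfolding inj_on_def by blast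
qed

lemma wr_elem_bij_betw: "wr_elem p k g \<Longrightarrow> bij_betw g (tree_V p k) (tree_V p k)"
  using endo_inj_surj[OF finite_tree_V _ wr_elem_inj_on] wr_elem_maps wr_elem_inj_on
  by (simp add: bij_betw_def image_subset_iff)

lemma wr_group_mult [simp]: "x \<otimes>\<^bsub>wr_group p k\<^esub> y = x \<circ> y"
  and wr_group_one [simp]: "\<one>\<^bsub>wr_group p k\<^esub> = id"
  by (simp_all add: wr_group_def)

lemma wr_carrier_iff: "g \<in> carrier (wr_group p k) \<longleftrightarrow> wr_elem p k g"
proof
  assume "g \<in> carrier (wr_group p k)"
  then have g: "g \<in> wr_carrier p k" by (simp add: wr_group_def)
  have "length (g []) = 0" using g by (auto simp: wr_carrier_def)
  then show "wr_elem p k g" using g by (auto simp: wr_carrier_def wr_elem_def)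
next
  assume g: "wr_elem p k g"
  have "g (butlast v) = butlast (g v)" if "v \<in> tree_V p k" "v \<noteq> []" for v
  proof -
    obtain u c where v: "v = u @ [c]" using \<open>v \<noteq> []\<close> by (cases v rule: rev_cases) auto
    then show ?thesis using that wr_elem_rot[OF g] by (simp add: tree_V_snoc)
  qed
  then show "g \<in> carrier (wr_group p k)"
    using g wr_elem_bij_betw[OF g] wr_elem_maps[OF g]
    by (auto simp: wr_group_def wr_carrier_def wr_elem_def)
qed

lemma wr_elem_id: "wr_elem p k id"
  by (auto simp: wr_elem_def intro: exI[of _ 0])

lemma rot_comp:
  assumes g: "wr_elem p k g" and h: "wr_elem p k h" and u: "u \<in> tree_V p k" "length u < k"
  shows "rot (g \<circ> h) u = (rot h u + rot g (h u)) mod p (Suc (length u))"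
proof -
  let ?P = "p (Suc (length u))"
  have hu: "h u \<in> tree_V p k" "length (h u) = length u" using wr_elem_maps[OF h u(1)] by auto
  have "(g \<circ> h) (u @ [0]) = g (h u @ [rot h u mod ?P])"
    using wr_elem_rot[OF h u p_pos] by simp
  also have "\<dots> = g (h u) @ [(rot h u mod ?P + rot g (h u)) mod ?P]"
    using wr_elem_rot[OF g hu(1)] hu u p_pos by simp
  finally show ?thesis by (simp add: rot_def mod_add_left_eq)
qed

lemma wr_elem_comp:
  assumes g: "wr_elem p k g" and h: "wr_elem p k h"
  shows "wr_elem p k (g \<circ> h)"
proof (rule wr_elemI[where r = "\<lambda>v. rot h v + rot g (h v)"])
  fix v c assume v: "v \<in> tree_V p k" "length v < k" "c < p (Suc (length v))"
  have hv: "h v \<in> tree_V p k" "length (h v) = length v" using wr_elem_maps[OF h v(1)] by auto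
  show "(g \<circ> h) (v @ [c]) = (g \<circ> h) v @ [(c + (rot h v + rot g (h v))) mod p (Suc (length v))]"
    using wr_elem_rot[OF h v] wr_elem_rot[OF g hv(1)] hv v p_pos
    by (simp add: mod_add_left_eq add.assoc)
qed (simp_all add: wr_elem_fixes[OF g] wr_elem_fixes[OF h] wr_elem_Nil[OF g] wr_elem_Nil[OF h])

lemma wr_elem_inverse:
  assumes g: "wr_elem p k g"
  obtains h where "wr_elem p k h" "h \<circ> g = id"
proof
  define h where "h v = (if v \<in> tree_V p k then inv_into (tree_V p k) g v else v)" for v
  have bij: "bij_betw g (tree_V p k) (tree_V p k)" by (rule wr_elem_bij_betw[OF g])
  have g_h: "g (h v) = v" for v
    using bij g by (auto simp: h_def wr_elem_def bij_betw_inv_into_right)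
  show h_g: "h \<circ> g = id"
  proof
    fix v show "(h \<circ> g) v = id v"
    proof (cases "v \<in> tree_V p k")
      case True
      then show ?thesis
        using bij_betw_inv_into_left[OF bij True] wr_elem_maps[OF g True] by (simp add: h_def)
    next
      case False
      then show ?thesis using g by (simp add: h_def wr_elem_def)
    qed
  qed
  have h_maps: "h v \<in> tree_V p k" if "v \<in> tree_V p k" for v
    using that bij by (auto simp: h_def bij_betw_def inv_into_into)
  show "wr_elem p k h"
  proof (rule wr_elemI[where r = "\<lambda>v. p (Suc (length v)) - rot g (h v)"])
    show "h [] = []" using fun_cong[OF h_g, of "[]"] wr_elem_Nil[OF g] by simp
  next
    fix v c assume v: "v \<in> tree_V p k" "length v < k" and c: "c < p (Suc (length v))"
    let ?P = "p (Suc (length v))" and ?w = "h v"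
    have w: "?w \<in> tree_V p k" "length ?w = length v" "length ?w < k"
      using h_maps[OF v(1)] wr_elem_length[OF g, of ?w] g_h[of v] v by auto
    have "rot g ?w < ?P" using rot_less[OF g w(1,3)] w(2) by simp
    then have "g (?w @ [(c + (?P - rot g ?w)) mod ?P]) = v @ [c]"
      using wr_elem_rot[OF g w(1,3)] w(2) g_h[of v] c p_pos by (simp add: mod_add_left_eq)
    then show "h (v @ [c]) = ?w @ [(c + (?P - rot g ?w)) mod ?P]"
      using fun_cong[OF h_g] by (metis comp_apply id_apply)
  qed (simp add: h_def)
qed

lemma group_wr_group: "group (wr_group p k)"
proof (rule groupI)
  fix x assume "x \<in> carrier (wr_group p k)"
  then obtain h where "wr_elem p k h" "h \<circ> x = id"
    using wr_elem_inverse by (auto simp: wr_carrier_iff)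
  then show "\<exists>y\<in>carrier (wr_group p k). y \<otimes>\<^bsub>wr_group p k\<^esub> x = \<one>\<^bsub>wr_group p k\<^esub>"
    using wr_carrier_iff[of h k] by auto
qed (auto simp: wr_carrier_iff wr_elem_id wr_elem_comp comp_assoc)

definition extend_rot :: "nat \<Rightarrow> (nat list \<Rightarrow> nat list) \<Rightarrow> (nat list \<Rightarrow> nat) \<Rightarrow> nat list \<Rightarrow> nat list"
  where "extend_rot k h m v = (if v \<in> tree_V p (Suc k) \<and> length v = Suc k
     then h (butlast v) @ [(last v + m (butlast v)) mod p (Suc k)] else h v)"

definition trunc :: "nat \<Rightarrow> (nat list \<Rightarrow> nat list) \<Rightarrow> nat list \<Rightarrow> nat list"
  where "trunc k g v = (if length v \<le> k then g v else v)"

lemma extend_rot_low: "length v \<le> k \<Longrightarrow> extend_rot k h m v = h v"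
  by (simp add: extend_rot_def)

lemma extend_rot_top:
  "u \<in> tree_V p k \<Longrightarrow> length u = k \<Longrightarrow> c < p (Suc k) \<Longrightarrow>
    extend_rot k h m (u @ [c]) = h u @ [(c + m u) mod p (Suc k)]"
  using tree_V_mono[of k "Suc k" u p] by (simp add: extend_rot_def tree_V_snoc)

lemma wr_elem_extend_rot:
  assumes h: "wr_elem p k h"
  shows "wr_elem p (Suc k) (extend_rot k h m)"
proof (rule wr_elemI[where r = "\<lambda>v. if length v < k then rot h v else m v"])
  fix v assume v: "v \<notin> tree_V p (Suc k)"
  then have "v \<notin> tree_V p k" using tree_V_mono[of k "Suc k" v p] by auto
  then show "extend_rot k h m v = v"
    using v wr_elem_fixes[OF h] by (simp add: extend_rot_def)
next
  fix v c assume v: "v \<in> tree_V p (Suc k)" "length v < Suc k" "c < p (Suc (length v))"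
  then have vk: "v \<in> tree_V p k" using tree_V_Suc_iff[of v k] by simp
  show "extend_rot k h m (v @ [c]) =
      extend_rot k h m v @ [(c + (if length v < k then rot h v else m v)) mod p (Suc (length v))]"
  proof (cases "length v < k")
    case True
    then show ?thesis using wr_elem_rot[OF h vk True v(3)] by (simp add: extend_rot_low)
  next
    case False
    then have "length v = k" using v(2) by simp
    then show ?thesis using v vk by (simp add: extend_rot_top extend_rot_low)
  qed
qed (simp add: extend_rot_low wr_elem_Nil[OF h])

lemma rot_extend_rot_top:
  "u \<in> tree_V p k \<Longrightarrow> length u = k \<Longrightarrow> rot (extend_rot k h m) u = m u mod p (Suc k)"
  using p_pos by (simp add: rot_def extend_rot_top)

lemma extend_rot_comp:
  assumes h': "wr_elem p k h'"
  shows "extend_rot k h m \<circ> extend_rot k h' m' = extend_rot k (h \<circ> h') (\<lambda>u. m' u + m (h' u))"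
proof
  fix v
  show "(extend_rot k h m \<circ> extend_rot k h' m') v = extend_rot k (h \<circ> h') (\<lambda>u. m' u + m (h' u)) v"
  proof (cases "v \<in> tree_V p (Suc k) \<and> length v = Suc k")
    case True
    then obtain u c where v: "v = u @ [c]" by (cases v rule: rev_cases) auto
    then have u: "u \<in> tree_V p k" "length u = k" "c < p (Suc k)"
      using True tree_V_Suc_iff[of u k] by (auto simp: tree_V_snoc)
    have "h' u \<in> tree_V p k" "length (h' u) = k" using wr_elem_maps[OF h' u(1)] u by auto
    then show ?thesis
      using u p_pos by (simp add: v extend_rot_top mod_add_left_eq add.assoc)
  next
    case False
    show ?thesis
    proof (cases "v \<in> tree_V p (Suc k)")
      case True
      then have "length v \<le> k" using False by (auto simp: tree_V_def)
      then show ?thesis using wr_elem_length[OF h'] by (simp add: extend_rot_low)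
    next
      case out: False
      then have "h' v = v" using wr_elem_fixes[OF h'] tree_V_mono[of k "Suc k" v p] by auto
      then show ?thesis using out by (simp add: extend_rot_def)
    qed
  qed
qed

lemma extend_rot_cong:
  assumes "\<And>u. u \<in> tree_level p k \<Longrightarrow> m u mod p (Suc k) = m' u mod p (Suc k)"
  shows "extend_rot k h m = extend_rot k h m'"
proof
  fix v
  show "extend_rot k h m v = extend_rot k h m' v"
  proof (cases "v \<in> tree_V p (Suc k) \<and> length v = Suc k")
    case True
    then obtain u c where v: "v = u @ [c]" by (cases v rule: rev_cases) auto
    then have u: "u \<in> tree_V p k" "length u = k" "c < p (Suc k)"
      using True tree_V_Suc_iff[of u k] by (auto simp: tree_V_snoc)
    moreover have "m u mod p (Suc k) = m' u mod p (Suc k)"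
      using assms tree_level_iff[of k k u] u by simp
    ultimately have "(c + m u) mod p (Suc k) = (c + m' u) mod p (Suc k)"
      by (intro mod_add_cong) simp_all
    then show ?thesis using u by (simp add: v extend_rot_top)
  next
    case False
    then show ?thesis unfolding extend_rot_def by (simp only: if_False)
  qed
qed

lemma wr_elem_trunc:
  assumes g: "wr_elem p (Suc k) g"
  shows "wr_elem p k (trunc k g)"
proof (rule wr_elemI[where r = "rot g"])
  fix v assume "v \<notin> tree_V p k"
  then show "trunc k g v = v"
    using wr_elem_fixes[OF g] tree_V_Suc_iff[of v k] by (simp add: trunc_def)
next
  fix v c assume v: "v \<in> tree_V p k" "length v < k" "c < p (Suc (length v))"
  then have "v \<in> tree_V p (Suc k)" "length v < Suc k" using tree_V_mono[of k "Suc k"] by auto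
  then show "trunc k g (v @ [c]) = trunc k g v @ [(c + rot g v) mod p (Suc (length v))]"
    using wr_elem_rot[OF g _ _ v(3)] v(2) by (simp add: trunc_def)
qed (simp add: trunc_def wr_elem_Nil[OF g])

lemma rot_trunc: "length u < k \<Longrightarrow> rot (trunc k g) u = rot g u"
  by (simp add: rot_def trunc_def)

lemma extend_rot_trunc:
  assumes g: "wr_elem p (Suc k) g"
  shows "extend_rot k (trunc k g) (rot g) = g"
proof
  fix v
  show "extend_rot k (trunc k g) (rot g) v = g v"
  proof (cases "v \<in> tree_V p (Suc k) \<and> length v = Suc k")
    case True
    then obtain u c where v: "v = u @ [c]" by (cases v rule: rev_cases) auto
    then have u: "u \<in> tree_V p k" "length u = k" "c < p (Suc k)"
      using True tree_V_Suc_iff[of u k] by (auto simp: tree_V_snoc)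
    then show ?thesis
      using wr_elem_rot[OF g, of u c] tree_V_mono[of k "Suc k" u]
      by (simp add: v extend_rot_top trunc_def)
  next
    case False
    show ?thesis
    proof (cases "length v \<le> k")
      case True
      then show ?thesis by (simp add: extend_rot_low trunc_def)
    next
      case long: False
      then have "v \<notin> tree_V p (Suc k)" using False by (auto simp: tree_V_def)
      then show ?thesis using long wr_elem_fixes[OF g] by (simp add: extend_rot_def trunc_def)
    qed
  qed
qed

lemma wr_ext_eq_extend_rot: "wr_ext p k g = extend_rot k g (\<lambda>_. 0)"
proof
  fix v
  show "wr_ext p k g v = extend_rot k g (\<lambda>_. 0) v"
  proof (cases "v \<in> tree_V p (Suc k) \<and> length v = Suc k")
    case True
    then have "last v = v ! k" by (cases v rule: rev_cases) auto
    then have "last v < p (Suc k)" using True by (simp add: tree_V_def)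
    then show ?thesis using True by (simp add: wr_ext_def extend_rot_def)
  next
    case False
    then show ?thesis unfolding wr_ext_def extend_rot_def by (simp only: if_False)
  qed
qed

lemma wr_ext_hom: "wr_ext p k \<in> hom (wr_group p k) (wr_group p (Suc k))"
  by (rule homI)
    (simp_all add: wr_carrier_iff wr_ext_eq_extend_rot wr_elem_extend_rot extend_rot_comp)

lemma inj_on_wr_ext: "inj_on (wr_ext p k) (carrier (wr_group p k))"
proof (rule inj_onI)
  fix g h assume g: "g \<in> carrier (wr_group p k)" and h: "h \<in> carrier (wr_group p k)"
    and eq: "wr_ext p k g = wr_ext p k h"
  show "g = h"
  proof
    fix v
    show "g v = h v"
    proof (cases "length v \<le> k")
      case True
      then show ?thesis
        using fun_cong[OF eq, of v] by (simp add: wr_ext_eq_extend_rot extend_rot_low)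
    next
      case False
      then have "v \<notin> tree_V p k" by (auto simp: tree_V_def)
      then show ?thesis
        using g h by (simp add: wr_carrier_iff wr_elem_fixes)
    qed
  qed
qed

sublocale direct_system "wr_group p" "wr_ext p"
  by (intro direct_system.intro group_wr_group wr_ext_hom)

lemma bij_betw_tree_level:
  assumes g: "wr_elem p k g" and i: "i \<le> k"
  shows "bij_betw g (tree_level p i) (tree_level p i)"
proof -
  have "tree_level p i \<subseteq> tree_V p k" using tree_level_iff[OF i] by auto
  then have inj: "inj_on g (tree_level p i)" by (rule inj_on_subset[OF wr_elem_inj_on[OF g]])
  have "g ` tree_level p i \<subseteq> tree_level p i"
  proof (rule image_subsetI)
    fix u assume "u \<in> tree_level p i"
    then have u: "u \<in> tree_V p k" "length u = i" using tree_level_iff[OF i, of u] by simp_all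
    have "g u \<in> tree_V p k \<and> length (g u) = length u" by (rule wr_elem_maps[OF g u(1)])
    then show "g u \<in> tree_level p i" using tree_level_iff[OF i, of "g u"] u(2) by simp
  qed
  then show ?thesis using endo_inj_surj[OF finite_tree_level _ inj] inj by (simp add: bij_betw_def)
qed

section \<open>Level sums and balanced elements\<close>

definition level_sum :: "(nat list \<Rightarrow> nat list) \<Rightarrow> nat \<Rightarrow> int" where
  "level_sum g i = (\<Sum>u\<in>tree_level p i. int (rot g u)) mod int (p (Suc i))"

lemma level_sum_comp:
  assumes g: "wr_elem p k g" and h: "wr_elem p k h" and i: "i < k"
  shows "level_sum (g \<circ> h) i = (level_sum g i + level_sum h i) mod int (p (Suc i))"
proof -
  let ?L = "tree_level p i" and ?P = "int (p (Suc i))"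
  have "(\<Sum>u\<in>?L. int (rot (g \<circ> h) u)) mod ?P
      = (\<Sum>u\<in>?L. int ((rot h u + rot g (h u)) mod p (Suc i))) mod ?P"
    using rot_comp[OF g h] tree_level_iff[of i k] i
    by (intro arg_cong2[where f = "(mod)"] sum.cong) auto
  also have "\<dots> = (\<Sum>u\<in>?L. (int (rot h u) + int (rot g (h u))) mod ?P) mod ?P"
    by (simp add: zmod_int)
  also have "\<dots> = (\<Sum>u\<in>?L. int (rot h u) + int (rot g (h u))) mod ?P"
    by (rule mod_sum_eq)
  also have "\<dots> = ((\<Sum>u\<in>?L. int (rot h u)) + (\<Sum>u\<in>?L. int (rot g (h u)))) mod ?P"
    by (simp add: sum.distrib)
  also have "(\<Sum>u\<in>?L. int (rot g (h u))) = (\<Sum>u\<in>?L. int (rot g u))"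
    using sum.reindex_bij_betw[OF bij_betw_tree_level[OF h], of i "\<lambda>u. int (rot g u)"] i by simp
  finally have sum_eq: "(\<Sum>u\<in>?L. int (rot (g \<circ> h) u)) mod ?P
      = ((\<Sum>u\<in>?L. int (rot h u)) + (\<Sum>u\<in>?L. int (rot g u))) mod ?P" .
  show ?thesis unfolding level_sum_def mod_add_eq sum_eq by (simp only: add.commute)
qed

lemma level_sum_id: "level_sum id i = 0"
  by (simp add: level_sum_def rot_def)

lemma level_sum_inverse:
  assumes "wr_elem p k g" "wr_elem p k g'" "g \<circ> g' = id" "i < k"
  shows "(level_sum g i + level_sum g' i) mod int (p (Suc i)) = 0"
  using level_sum_comp[OF assms(1,2,4)] assms(3) level_sum_id by simp

definition balanced :: "nat \<Rightarrow> (nat list \<Rightarrow> nat list) set" where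
  "balanced k = {g. wr_elem p k g \<and> (\<forall>i<k. level_sum g i = 0)}"

lemma subgroup_balanced: "subgroup (balanced k) (wr_group p k)"
proof -
  interpret G: group "wr_group p k" by (rule group_wr_group)
  show ?thesis
  proof (rule G.subgroupI)
    show "balanced k \<subseteq> carrier (wr_group p k)" by (auto simp: balanced_def wr_carrier_iff)
    show "balanced k \<noteq> {}" using wr_elem_id level_sum_id by (auto simp: balanced_def)
  next
    fix g assume g: "g \<in> balanced k"
    let ?g' = "inv\<^bsub>wr_group p k\<^esub> g"
    have gc: "g \<in> carrier (wr_group p k)" using g by (simp add: balanced_def wr_carrier_iff)
    have g': "wr_elem p k ?g'" "g \<circ> ?g' = id"
      using G.inv_closed[OF gc] G.r_inv[OF gc] by (simp_all add: wr_carrier_iff)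
    have "level_sum ?g' i = 0" if "i < k" for i
      using level_sum_inverse[OF _ g' that] g that by (simp add: balanced_def level_sum_def)
    then show "?g' \<in> balanced k" using g' by (simp add: balanced_def)
  next
    fix g h assume g: "g \<in> balanced k" and h: "h \<in> balanced k"
    then have elems: "wr_elem p k g" "wr_elem p k h" by (simp_all add: balanced_def)
    have "level_sum (g \<circ> h) i = 0" if "i < k" for i
      using level_sum_comp[OF elems that] g h that by (simp add: balanced_def)
    then show "g \<otimes>\<^bsub>wr_group p k\<^esub> h \<in> balanced k"
      using elems by (simp add: balanced_def wr_elem_comp)
  qed
qed

lemma commutator_balanced:
  assumes x: "x \<in> carrier (wr_group p k)" and y: "y \<in> carrier (wr_group p k)"
  shows "commutator (wr_group p k) x y \<in> balanced k"
proof -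
  interpret G: group "wr_group p k" by (rule group_wr_group)
  let ?x' = "inv\<^bsub>wr_group p k\<^esub> x" and ?y' = "inv\<^bsub>wr_group p k\<^esub> y"
  have elems: "wr_elem p k x" "wr_elem p k y" "wr_elem p k ?x'" "wr_elem p k ?y'"
    using x y G.inv_closed[OF x] G.inv_closed[OF y] by (simp_all add: wr_carrier_iff)
  have invs: "x \<circ> ?x' = id" "y \<circ> ?y' = id"
    using G.r_inv[OF x] G.r_inv[OF y] by simp_all
  have "level_sum (x \<circ> y \<circ> ?x' \<circ> ?y') i = 0" if i: "i < k" for i
  proof -
    let ?P = "int (p (Suc i))"
    have "level_sum (x \<circ> y \<circ> ?x' \<circ> ?y') i
        = (((level_sum x i + level_sum y i) mod ?P + level_sum ?x' i) mod ?P
            + level_sum ?y' i) mod ?P"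
      using level_sum_comp[OF wr_elem_comp[OF wr_elem_comp[OF elems(1,2)] elems(3)] elems(4) i]
        level_sum_comp[OF wr_elem_comp[OF elems(1,2)] elems(3) i] level_sum_comp[OF elems(1,2) i]
      by simp
    also have "\<dots> = ((level_sum x i + level_sum ?x' i) + (level_sum y i + level_sum ?y' i)) mod ?P"
      by (simp add: mod_simps algebra_simps)
    also have "\<dots> = ((level_sum x i + level_sum ?x' i) mod ?P
        + (level_sum y i + level_sum ?y' i) mod ?P) mod ?P"
      by (simp add: mod_simps)
    also have "\<dots> = 0"
      using level_sum_inverse[OF elems(1,3) invs(1) i] level_sum_inverse[OF elems(2,4) invs(2) i]
      by simp
    finally show ?thesis .
  qed
  then show ?thesis
    using elems by (simp add: commutator_def balanced_def wr_elem_comp)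
qed

lemma derived_subset_balanced: "derived (wr_group p k) (carrier (wr_group p k)) \<subseteq> balanced k"
  unfolding derived_def
  using commutator_balanced
  by (intro group.generate_subgroup_incl[OF group_wr_group _ subgroup_balanced])
    (auto simp: commutator_def)

lemma balanced_trunc: "g \<in> balanced (Suc k) \<Longrightarrow> trunc k g \<in> balanced k"
proof -
  assume g: "g \<in> balanced (Suc k)"
  have "level_sum (trunc k g) i = level_sum g i" if "i < k" for i
    unfolding level_sum_def
    using that tree_level_iff[of i i]
    by (intro arg_cong2[where f = "(mod)"] sum.cong) (auto simp: rot_trunc)
  then show ?thesis using g by (simp add: balanced_def wr_elem_trunc)
qed

end

section \<open>The odometer\<close>

lemma cyclic_coboundary:
  fixes n :: "'a \<Rightarrow> int" and \<nu> :: "'a \<Rightarrow> nat"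
  assumes fin: "finite A" and inj: "inj_on \<nu> A" and less: "\<And>u. u \<in> A \<Longrightarrow> \<nu> u < N"
    and step: "\<And>u. u \<in> A \<Longrightarrow> \<nu> (\<sigma> u) = (\<nu> u + 1) mod N"
    and total: "P dvd (\<Sum>u\<in>A. n u)"
  shows "\<exists>M. \<forall>u\<in>A. P dvd M (\<sigma> u) - M u - n u"
proof -
  define M where "M u = (\<Sum>u'\<in>{u'\<in>A. \<nu> u' < \<nu> u}. n u')" for u
  have "P dvd M (\<sigma> u) - M u - n u" if u: "u \<in> A" for u
  proof (cases "\<nu> u + 1 < N")
    case True
    then have "{u'\<in>A. \<nu> u' < \<nu> (\<sigma> u)} = insert u {u'\<in>A. \<nu> u' < \<nu> u}"
      using u step[OF u] inj by (auto simp: less_Suc_eq inj_on_eq_iff)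
    then have "M (\<sigma> u) = n u + M u"
      unfolding M_def using fin by simp
    then show ?thesis by simp
  next
    case False
    then have "\<nu> u + 1 = N" using less[OF u] by simp
    then have "\<nu> (\<sigma> u) = 0" using step[OF u] by simp
    then have wrap: "M (\<sigma> u) = 0" by (simp add: M_def)
    have "\<nu> u' < \<nu> u" if "u' \<in> A" "u' \<noteq> u" for u'
    proof -
      have "\<nu> u' \<noteq> \<nu> u" using inj that u by (auto dest: inj_onD)
      then show ?thesis using less[OF that(1)] \<open>\<nu> u + 1 = N\<close> by simp
    qed
    then have "{u'\<in>A. \<nu> u' < \<nu> u} = A - {u}" by auto
    then have "M u = (\<Sum>u\<in>A. n u) - n u"
      unfolding M_def using fin u by (simp add: sum_diff1)
    then show ?thesis using wrap total by simp
  qed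
  then show ?thesis by blast
qed

context wreath
begin

fun top_vertex :: "nat \<Rightarrow> nat list" where
  "top_vertex 0 = []"
| "top_vertex (Suc k) = top_vertex k @ [p (Suc k) - 1]"

definition top_indicator :: "nat \<Rightarrow> nat list \<Rightarrow> nat" where
  "top_indicator k u = (if u = top_vertex k then 1 else 0)"

fun odometer :: "nat \<Rightarrow> nat list \<Rightarrow> nat list" where
  "odometer 0 = id"
| "odometer (Suc k) = extend_rot k (odometer k) (top_indicator k)"

lemma wr_elem_odometer: "wr_elem p k (odometer k)"
  by (induction k) (simp_all only: odometer.simps wr_elem_id wr_elem_extend_rot)

definition place_value :: "nat \<Rightarrow> nat" where
  "place_value j = (\<Prod>l<j. p (Suc l))"

definition vertex_index :: "nat list \<Rightarrow> nat" where
  "vertex_index v = (\<Sum>j<length v. v ! j * place_value j)"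

lemma place_value_Suc: "place_value (Suc j) = place_value j * p (Suc j)"
  by (simp add: place_value_def)

lemma place_value_pos: "0 < place_value j"
  using p_pos by (simp add: place_value_def)

lemma vertex_index_Nil [simp]: "vertex_index [] = 0"
  by (simp add: vertex_index_def)

lemma vertex_index_snoc: "vertex_index (v @ [c]) = vertex_index v + c * place_value (length v)"
  by (simp add: vertex_index_def nth_append)

lemma vertex_index_less: "v \<in> tree_V p k \<Longrightarrow> vertex_index v < place_value (length v)"
proof (induction v rule: rev_induct)
  case Nil
  then show ?case by (simp add: place_value_pos)
next
  case (snoc c v)
  then have v: "v \<in> tree_V p k" "c < p (Suc (length v))" by (auto simp: tree_V_snoc)
  have "vertex_index (v @ [c]) < place_value (length v) + c * place_value (length v)"
    using snoc.IH[OF v(1)] by (simp add: vertex_index_snoc)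
  also have "\<dots> = Suc c * place_value (length v)" by simp
  also have "\<dots> \<le> p (Suc (length v)) * place_value (length v)"
    using v(2) by (intro mult_le_mono1) simp
  finally show ?case by (simp add: place_value_Suc mult.commute)
qed

lemma vertex_index_inj:
  "v \<in> tree_V p k \<Longrightarrow> w \<in> tree_V p k \<Longrightarrow> length v = length w \<Longrightarrow>
    vertex_index v = vertex_index w \<Longrightarrow> v = w"
proof (induction v arbitrary: w rule: rev_induct)
  case Nil
  then show ?case by simp
next
  case (snoc c v)
  then obtain w' d where w: "w = w' @ [d]" by (cases w rule: rev_cases) auto
  have v: "v \<in> tree_V p k" and w': "w' \<in> tree_V p k" and l: "length v = length w'"
    using snoc.prems by (auto simp: w tree_V_snoc)
  let ?N = "place_value (length v)"
  have less: "vertex_index v < ?N" "vertex_index w' < ?N"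
    using vertex_index_less[OF v] vertex_index_less[OF w'] l by auto
  have eq: "vertex_index v + c * ?N = vertex_index w' + d * ?N"
    using snoc.prems l by (simp add: w vertex_index_snoc)
  have "(vertex_index v + c * ?N) mod ?N = vertex_index v"
    "(vertex_index w' + d * ?N) mod ?N = vertex_index w'"
    using less by simp_all
  then have idx: "vertex_index v = vertex_index w'" using eq by simp
  then have "c = d" using eq place_value_pos[of "length v"] by simp
  then show ?case using snoc.IH[OF v w' l idx] w by simp
qed

lemma inj_on_vertex_index: "inj_on vertex_index (tree_level p k)"
proof (rule inj_onI)
  fix v w assume "v \<in> tree_level p k" "w \<in> tree_level p k" "vertex_index v = vertex_index w"
  then show "v = w" using vertex_index_inj[of v k w] by (simp add: tree_level_def)
qed

lemma top_vertex:
  "top_vertex k \<in> tree_level p k \<and> vertex_index (top_vertex k) = place_value k - 1"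
proof (induction k)
  case 0
  then show ?case by (simp add: tree_level_def place_value_def)
next
  case (Suc k)
  have N: "0 < place_value k" by (rule place_value_pos)
  have "top_vertex (Suc k) \<in> tree_V p (Suc k)"
    using Suc tree_V_mono[of k "Suc k"] p_pos by (simp add: tree_level_def tree_V_snoc)
  moreover have "vertex_index (top_vertex (Suc k))
      = place_value k - 1 + (p (Suc k) - 1) * place_value k"
    using Suc by (simp add: tree_level_def vertex_index_snoc)
  moreover have "\<dots> = place_value k * p (Suc k) - 1"
    using N p_pos[of k] by (simp add: diff_mult_distrib algebra_simps)
  ultimately show ?case using Suc by (simp add: tree_level_def place_value_Suc)
qed

lemma vertex_index_odometer:
  assumes "u \<in> tree_V p k" "length u = k"
  shows "vertex_index (odometer k u) = (vertex_index u + 1) mod place_value k"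
  using assms
proof (induction k arbitrary: u)
  case 0
  then show ?case by (simp add: place_value_def)
next
  case (Suc k)
  then obtain v c where u: "u = v @ [c]" by (cases u rule: rev_cases) auto
  then have v: "v \<in> tree_V p k" "length v = k" "c < p (Suc k)"
    using Suc.prems tree_V_Suc_iff[of v k] by (auto simp: tree_V_snoc)
  let ?N = "place_value k" and ?P = "p (Suc k)"
  have ov: "length (odometer k v) = k" using wr_elem_length[OF wr_elem_odometer] v by simp
  have odometer_u: "odometer (Suc k) u = odometer k v @ [(c + top_indicator k v) mod ?P]"
    using v by (simp add: u extend_rot_top)
  show ?case
  proof (cases "v = top_vertex k")
    case True
    then have "vertex_index v = ?N - 1" using top_vertex[of k] by simp
    then have "vertex_index (odometer k v) = 0"
      using Suc.IH[OF v(1,2)] place_value_pos[of k] by simp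
    then have "vertex_index (odometer (Suc k) u) = ((c + 1) mod ?P) * ?N"
      using odometer_u True ov by (simp add: vertex_index_snoc top_indicator_def)
    also have "\<dots> = ((c + 1) * ?N) mod (?P * ?N)" by (rule mod_mult_mult2[symmetric])
    also have "(c + 1) * ?N = vertex_index u + 1"
      using \<open>vertex_index v = ?N - 1\<close> place_value_pos[of k] v
      by (simp add: u vertex_index_snoc algebra_simps)
    finally show ?thesis by (simp add: place_value_Suc mult.commute)
  next
    case False
    then have "vertex_index v \<noteq> ?N - 1"
      using top_vertex[of k] vertex_index_inj[OF v(1), of "top_vertex k"] v(2)
      by (auto simp: tree_level_def)
    then have carry_free: "vertex_index v + 1 < ?N" using vertex_index_less[OF v(1)] v(2) by simp
    then have "vertex_index (odometer (Suc k) u) = vertex_index u + 1"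
      using Suc.IH[OF v(1,2)] odometer_u False ov v(2,3)
      by (simp add: u vertex_index_snoc top_indicator_def)
    moreover have "vertex_index (odometer (Suc k) u) < place_value (Suc k)"
      using vertex_index_less wr_elem_maps[OF wr_elem_odometer Suc.prems(1)] Suc.prems(2) by metis
    ultimately show ?thesis by simp
  qed
qed

section \<open>Balanced elements are commutators\<close>

lemma rotation_defect_sum:
  assumes g: "g \<in> balanced (Suc k)" and b0: "wr_elem p k b0"
  shows "int (p (Suc k)) dvd (\<Sum>u\<in>tree_level p k. int (top_indicator k (b0 u))
    - int (top_indicator k u) - int (rot g (b0 (odometer k u))))"
proof -
  let ?L = "tree_level p k"
  have "(\<Sum>u\<in>?L. int (top_indicator k (b0 u))) = (\<Sum>u\<in>?L. int (top_indicator k u))"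
    using sum.reindex_bij_betw[OF bij_betw_tree_level[OF b0 order_refl]] by simp
  moreover have "bij_betw (b0 \<circ> odometer k) ?L ?L"
    using bij_betw_trans[OF bij_betw_tree_level[OF wr_elem_odometer] bij_betw_tree_level[OF b0]]
    by simp
  then have "(\<Sum>u\<in>?L. int (rot g (b0 (odometer k u)))) = (\<Sum>u\<in>?L. int (rot g u))"
    using sum.reindex_bij_betw[of "b0 \<circ> odometer k" ?L ?L "\<lambda>u. int (rot g u)"] by simp
  moreover have "int (p (Suc k)) dvd (\<Sum>u\<in>?L. int (rot g u))"
    using g by (simp add: balanced_def level_sum_def dvd_eq_mod_eq_0)
  ultimately show ?thesis by (simp add: sum_subtractf)
qed

lemma odometer_coboundary:
  assumes "int (p (Suc k)) dvd (\<Sum>u\<in>tree_level p k. n u)"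
  obtains m :: "nat list \<Rightarrow> nat"
  where "\<And>u. u \<in> tree_level p k \<Longrightarrow> int (p (Suc k)) dvd int (m (odometer k u)) - int (m u) - n u"
proof -
  let ?P = "int (p (Suc k))"
  have "vertex_index u < place_value k"
    and "vertex_index (odometer k u) = (vertex_index u + 1) mod place_value k"
    if "u \<in> tree_level p k" for u
    using that vertex_index_less[of u k] vertex_index_odometer[of u k]
    by (auto simp: tree_level_def)
  then obtain M where M: "\<forall>u\<in>tree_level p k. ?P dvd M (odometer k u) - M u - n u"
    using cyclic_coboundary[OF finite_tree_level inj_on_vertex_index _ _ assms] by blast
  define m where "m u = nat (M u mod ?P)" for u
  have m_cong: "?P dvd int (m u) - M u" for u
    using p_pos[of k] by (simp add: m_def mod_eq_dvd_iff[symmetric])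
  have "?P dvd int (m (odometer k u)) - int (m u) - n u" if "u \<in> tree_level p k" for u
    using dvd_add[OF dvd_diff[OF m_cong[of "odometer k u"] m_cong[of u]] bspec[OF M that]]
    by (simp add: algebra_simps)
  then show ?thesis by (rule that)
qed

text \<open>Both sides of g b a = a b are extensions (extend_rot_comp) of the two sides of the
  inductive hypothesis on T_k; they agree once the rotations at level k agree modulo p_(k+1),
  which is the coboundary equation solved by m.\<close>

lemma balanced_Suc_conj_odometer:
  assumes g: "g \<in> balanced (Suc k)" and b0: "wr_elem p k b0"
    and conj: "trunc k g \<circ> b0 \<circ> odometer k = odometer k \<circ> b0"
  shows "\<exists>b. wr_elem p (Suc k) b \<and> g \<circ> b \<circ> odometer (Suc k) = odometer (Suc k) \<circ> b"
proof -
  let ?P = "p (Suc k)" and ?\<delta> = "top_indicator k"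
  obtain m where m: "\<And>u. u \<in> tree_level p k \<Longrightarrow> int ?P dvd int (m (odometer k u)) - int (m u)
      - (int (?\<delta> (b0 u)) - int (?\<delta> u) - int (rot g (b0 (odometer k u))))"
    using odometer_coboundary[OF rotation_defect_sum[OF g b0]] by blast
  have labels: "(?\<delta> u + (m (odometer k u) + rot g (b0 (odometer k u)))) mod ?P
      = (m u + ?\<delta> (b0 u)) mod ?P"
    if "u \<in> tree_level p k" for u
  proof -
    let ?l = "?\<delta> u + (m (odometer k u) + rot g (b0 (odometer k u)))" and ?r = "m u + ?\<delta> (b0 u)"
    have "int ?P dvd int ?l - int ?r" using m[OF that] by (simp add: algebra_simps)
    then have "int ?l mod int ?P = int ?r mod int ?P" by (simp only: mod_eq_dvd_iff)
    then have "int (?l mod ?P) = int (?r mod ?P)" by (simp only: zmod_int)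
    then show ?thesis by (simp only: of_nat_eq_iff)
  qed
  define b where "b = extend_rot k b0 m"
  have "g \<circ> b \<circ> odometer (Suc k)
      = extend_rot k (trunc k g \<circ> b0 \<circ> odometer k)
          (\<lambda>u. ?\<delta> u + (m (odometer k u) + rot g (b0 (odometer k u))))"
    using g unfolding balanced_def
    by (subst extend_rot_trunc[of k g, symmetric])
      (simp_all add: b_def extend_rot_comp b0 wr_elem_odometer)
  also have "\<dots> = extend_rot k (odometer k \<circ> b0) (\<lambda>u. m u + ?\<delta> (b0 u))"
    unfolding conj using labels by (rule extend_rot_cong)
  also have "\<dots> = odometer (Suc k) \<circ> b"
    by (simp add: b_def extend_rot_comp b0)
  finally show ?thesis using wr_elem_extend_rot[OF b0] unfolding b_def by blast
qed

lemma balanced_conj_odometer: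
  "g \<in> balanced k \<Longrightarrow> \<exists>b. wr_elem p k b \<and> g \<circ> b \<circ> odometer k = odometer k \<circ> b"
proof (induction k arbitrary: g)
  case 0
  have "g v = v" for v
    using 0 wr_elem_fixes[of p 0 g v] wr_elem_Nil[of p 0 g]
    by (cases v) (auto simp: balanced_def tree_V_def)
  then show ?case using wr_elem_id by (auto simp: fun_eq_iff)
next
  case (Suc k)
  obtain b0 where "wr_elem p k b0" "trunc k g \<circ> b0 \<circ> odometer k = odometer k \<circ> b0"
    using Suc.IH[OF balanced_trunc[OF Suc.prems]] by blast
  then show ?case by (rule balanced_Suc_conj_odometer[OF Suc.prems])
qed

lemma balanced_is_commutator:
  assumes "g \<in> balanced k"
  shows "\<exists>x\<in>carrier (wr_group p k). \<exists>y\<in>carrier (wr_group p k). g = commutator (wr_group p k) x y"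
proof -
  interpret G: group "wr_group p k" by (rule group_wr_group)
  obtain b where b: "wr_elem p k b" "g \<circ> b \<circ> odometer k = odometer k \<circ> b"
    using balanced_conj_odometer[OF assms] by blast
  have carrier: "odometer k \<in> carrier (wr_group p k)" "b \<in> carrier (wr_group p k)"
    "g \<in> carrier (wr_group p k)"
    using b(1) assms by (simp_all add: wr_carrier_iff wr_elem_odometer balanced_def)
  have "odometer k ((inv\<^bsub>wr_group p k\<^esub> (odometer k)) v) = v"
    and "b ((inv\<^bsub>wr_group p k\<^esub> b) v) = v" for v
    using fun_cong[OF G.r_inv[OF carrier(1)], of v] fun_cong[OF G.r_inv[OF carrier(2)], of v]
    by simp_all
  moreover have "odometer k (b v) = g (b (odometer k v))" for v
    using fun_cong[OF b(2), of v] by simp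
  ultimately have "commutator (wr_group p k) (odometer k) b = g"
    unfolding commutator_def by (simp add: fun_eq_iff)
  then show ?thesis using carrier by metis
qed

lemma balanced_nontrivial:
  assumes "2 \<le> p 1" "2 \<le> p 2"
  shows "\<exists>g\<in>balanced 2. g \<noteq> id"
proof
  define m where "m (u :: nat list) = (if u = [0] then 1 else if u = [1] then p 2 - 1 else 0)" for u
  define g where "g = extend_rot 1 id m"
  have elem: "wr_elem p 2 g"
    using wr_elem_extend_rot[OF wr_elem_id[of 1]] by (simp add: g_def numeral_2_eq_2)
  have "level_sum g 0 = 0"
  proof -
    have "tree_level p 0 = {[]}" by (auto simp: tree_level_def tree_V_def)
    then show ?thesis by (simp add: level_sum_def g_def extend_rot_low rot_def)
  qed
  moreover have "level_sum g 1 = 0"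
  proof -
    have rot_g: "rot g u = m u mod p 2" if "u \<in> tree_level p 1" for u
      using that rot_extend_rot_top[of u 1 id m] by (simp add: g_def tree_level_def numeral_2_eq_2)
    have sub: "{[0], [1]} \<subseteq> tree_level p 1" using assms by (auto simp: tree_level_def tree_V_def)
    have "(\<Sum>u\<in>tree_level p 1. int (rot g u)) = (\<Sum>u\<in>tree_level p 1. int (m u mod p 2))"
      using rot_g by simp
    also have "\<dots> = (\<Sum>u\<in>{[0], [1]}. int (m u mod p 2))"
      using sub finite_tree_level[of p 1] by (intro sum.mono_neutral_right) (auto simp: m_def)
    also have "\<dots> = int (p 2)" using assms by (simp add: m_def)
    finally show ?thesis by (simp add: level_sum_def numeral_2_eq_2)
  qed
  ultimately have "\<forall>i<2. level_sum g i = 0" by (auto simp: less_2_cases_iff)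
  then show "g \<in> balanced 2" using elem by (simp add: balanced_def)
  have "g [0, 0] = [0, 1]"
    using extend_rot_top[of "[0]" 1 0 id m] assms
    by (simp add: g_def m_def tree_V_def numeral_2_eq_2)
  then show "g \<noteq> id" by auto
qed

lemma derived_wr_group_commutator:
  "g \<in> derived (wr_group p k) (carrier (wr_group p k)) \<Longrightarrow>
    \<exists>x\<in>carrier (wr_group p k). \<exists>y\<in>carrier (wr_group p k). g = commutator (wr_group p k) x y"
  using balanced_is_commutator derived_subset_balanced by blast

lemma derived_limit_nontrivial:
  assumes "2 \<le> p 1" "2 \<le> p 2"
  shows "\<exists>z\<in>derived DL (carrier DL). z \<noteq> \<one>\<^bsub>DL\<^esub>"
proof -
  obtain g where g: "g \<in> balanced 2" "g \<noteq> id"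
    using balanced_nontrivial[OF assms] by blast
  then obtain x y where xy: "x \<in> carrier (wr_group p 2)" "y \<in> carrier (wr_group p 2)"
    and g_comm: "g = commutator (wr_group p 2) x y"
    using balanced_is_commutator by blast
  interpret L: group DL by (rule group_direct_limit)
  interpret i: group_hom "wr_group p 2" DL "inc 2" by (rule group_hom_inc)
  have "inc 2 g \<in> derived DL (carrier DL)"
    using xy by (simp add: g_comm i.hom_commutator L.commutator_in_derived)
  moreover have "g \<in> carrier (wr_group p 2)" "id \<in> carrier (wr_group p 2)"
    using g(1) by (simp_all add: balanced_def wr_carrier_iff wr_elem_id)
  then have "inc 2 g \<noteq> inc 2 id"
    using g(2) inj_onD[OF inj_on_inc[OF inj_on_wr_ext]] by blast
  ultimately show ?thesis
    using one_direct_limit_inc[of 2] by auto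
qed

end

theorem mainTheorem7:
  fixes p :: "nat \<Rightarrow> nat"
  assumes "\<And>i. 1 \<le> i \<Longrightarrow> 2 \<le> p i"
  shows "commutator_width (direct_limit (wr_group p) (wr_ext p)) = 1"
proof -
  interpret wreath p
  proof
    fix j show "0 < p (Suc j)" using assms[of "Suc j"] by simp
  qed
  obtain z where "z \<in> derived DL (carrier DL)" "z \<noteq> \<one>\<^bsub>DL\<^esub>"
    using derived_limit_nontrivial assms by auto
  then show ?thesis
    using group.commutator_width_eq_1[OF group_direct_limit
        derived_direct_limit_commutator[OF derived_wr_group_commutator]]
    by blast
qed

end
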